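(* Consider the continuous-time (i.e., $N\to\infty$) version of the NOMA Pareto-boundary problem: maximize $R\in\mathbb{R}$ over policies $\{\mathbf{\Theta}(t),\mu(t),p_k(t)\}_{t\in[0,T]}$ subject to: for all $t$, $\mathbf{\Theta}(t)\in\mathcal{S}$; $p_k(t)\ge 0$ for all $k$ and $\sum_{k=1}^K p_k(t)\le P_{\max}$; $\mu(t)$ is a decoding order (a permutation $(\mu_1(t),\dots,\mu_K(t))$ of $\{1,\dots,K\}$) such that $|h_k+\mathbf{g}_k^H\mathbf{\Theta}(t)\mathbf{v}|^2\ge |h_j+\mathbf{g}_j^H\mathbf{\Theta}(t)\mathbf{v}|^2$ whenever $\mu_j(t)<\mu_k(t)$; and the rate-profile constraints $\frac{1}{T}\int_0^T R_k(t)\,dt\ge \alpha_k R$ for all $k$, where $$R_k(t)=\log_2\left(1+\frac{|h_k+\mathbf{g}_k^H\mathbf{\Theta}(t)\mathbf{v}|^2p_k(t)}{\sum_{i:\,\mu_i(t)>\mu_k(t)}|h_k+\mathbf{g}_k^H\mathbf{\Theta}(t)\mathbf{v}|^2p_i(t)+\sigma^2}\right).$$ This problem satisfies the time-sharing condition: for any two policies $x$ and $y$ that are optimal (feasible) for this problem with rate-profile constraints satisfied at values $R_x$ and $R_y$ respectively (i.e., $\frac1T\int_0^T R_{k,x}(t)dt\ge\alpha_kR_x$ and $\frac1T\int_0^T R_{k,y}(t)dt\ge\alpha_kR_y$ for all $k$), and any $\nu\in[0,1]$, there exists a policy $z$ satisfying all the per-time constraints above such that $\frac{1}{T}\int_0^T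 R_{k,z}(t)\,dt\ge \alpha_k\big(\nu R_x+(1-\nu)R_y\big)$ for all $k$ (equivalently, $z$ attains value at least $\nu R_x+(1-\nu)R_y$).
   Context: Setting: an access point (single antenna) serves $K$ single-antenna users with the help of an intelligent reflecting surface with $M$ sub-surfaces. $h_k\in\mathbb{C}$ is the AP–user $k$ channel, $\mathbf{v}\in\mathbb{C}^{M}$ the AP–IRS channel, $\mathbf{g}_k\in\mathbb{C}^{M}$ the IRS–user $k$ channel. $\mathcal{S}$ is the (finite) set of diagonal matrices $\mathbf{\Theta}=\mathrm{diag}(e^{j\theta_1},\dots,e^{j\theta_M})$ with each $\theta_m\in\{2\pi n/L: n=0,\dots,L-1\}$, $L=2^b$ for a positive integer $b$. $\sigma^2>0$ is the noise power, $P_{\max}>0$ the power budget, $T>0$ the block duration. The rate-profile vector $\boldsymbol{\alpha}=(\alpha_1,\dots,\alpha_K)$ satisfies $\alpha_k\ge0$ and $\sum_k\alpha_k=1$. Policies are (measurable) functions of $t\in[0,T]$. *)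

theory Defs
  imports "HOL-Analysis.Analysis"
begin

text \<open>Users are indexed by 1..K, IRS sub-surfaces by 1..M.
  An IRS configuration Theta = diag(e^{j theta_1},...,e^{j theta_M}) is represented by its
  diagonal, a function nat => complex (only the entries 1..M are relevant).\<close>

definition phase_set :: "nat \<Rightarrow> real set" where
  "phase_set L = {2 * pi * real n / real L | n. n < L}"

definition IRS_set :: "nat \<Rightarrow> nat \<Rightarrow> (nat \<Rightarrow> complex) set" where
  "IRS_set M L = {\<Theta>. \<forall>m\<in>{1..M}. \<exists>\<theta>\<in>phase_set L. \<Theta> m = cis \<theta>}"

definition eff_gain ::
  "(nat \<Rightarrow> complex) \<Rightarrow> (nat \<Rightarrow> nat \<Rightarrow> complex) \<Rightarrow> (nat \<Rightarrow> complex) \<Rightarrow> nat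
    \<Rightarrow> (nat \<Rightarrow> complex) \<Rightarrow> nat \<Rightarrow> real" where
  "eff_gain h g v M \<Theta> k = (cmod (h k + (\<Sum>m=1..M. cnj (g k m) * \<Theta> m * v m)))\<^sup>2"

definition decoding_order :: "nat \<Rightarrow> (nat \<Rightarrow> real) \<Rightarrow> (nat \<Rightarrow> nat) \<Rightarrow> bool" where
  "decoding_order K gain \<mu> \<longleftrightarrow> bij_betw \<mu> {1..K} {1..K} \<and>
     (\<forall>j\<in>{1..K}. \<forall>k\<in>{1..K}. \<mu> j < \<mu> k \<longrightarrow> gain j \<le> gain k)"

definition inst_rate ::
  "(nat \<Rightarrow> complex) \<Rightarrow> (nat \<Rightarrow> nat \<Rightarrow> complex) \<Rightarrow> (nat \<Rightarrow> complex) \<Rightarrow> nat \<Rightarrow> nat \<Rightarrow> real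
    \<Rightarrow> (nat \<Rightarrow> complex) \<Rightarrow> (nat \<Rightarrow> nat) \<Rightarrow> (nat \<Rightarrow> real) \<Rightarrow> nat \<Rightarrow> real" where
  "inst_rate h g v M K \<sigma>2 \<Theta> \<mu> p k =
     log 2 (1 + eff_gain h g v M \<Theta> k * p k /
       ((\<Sum>i\<in>{i\<in>{1..K}. \<mu> i > \<mu> k}. eff_gain h g v M \<Theta> k * p i) + \<sigma>2))"

definition pointwise_feasible ::
  "(nat \<Rightarrow> complex) \<Rightarrow> (nat \<Rightarrow> nat \<Rightarrow> complex) \<Rightarrow> (nat \<Rightarrow> complex) \<Rightarrow> nat \<Rightarrow> nat \<Rightarrow> nat
    \<Rightarrow> real \<Rightarrow> (nat \<Rightarrow> complex) \<Rightarrow> (nat \<Rightarrow> nat) \<Rightarrow> (nat \<Rightarrow> real) \<Rightarrow> bool" where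
  "pointwise_feasible h g v M K L Pmax \<Theta> \<mu> p \<longleftrightarrow>
     \<Theta> \<in> IRS_set M L \<and> (\<forall>k\<in>{1..K}. 0 \<le> p k) \<and> (\<Sum>k=1..K. p k) \<le> Pmax \<and>
     decoding_order K (eff_gain h g v M \<Theta>) \<mu>"

definition admissible_policy ::
  "(nat \<Rightarrow> complex) \<Rightarrow> (nat \<Rightarrow> nat \<Rightarrow> complex) \<Rightarrow> (nat \<Rightarrow> complex) \<Rightarrow> nat \<Rightarrow> nat \<Rightarrow> nat
    \<Rightarrow> real \<Rightarrow> real \<Rightarrow> (real \<Rightarrow> nat \<Rightarrow> complex) \<Rightarrow> (real \<Rightarrow> nat \<Rightarrow> nat) \<Rightarrow> (real \<Rightarrow> nat \<Rightarrow> real)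
    \<Rightarrow> bool" where
  "admissible_policy h g v M K L Pmax T \<Theta> \<mu> p \<longleftrightarrow>
     (\<forall>m. (\<lambda>t. \<Theta> t m) \<in> borel_measurable lborel) \<and>
     (\<forall>k. (\<lambda>t. \<mu> t k) \<in> measurable lborel (count_space UNIV)) \<and>
     (\<forall>k. (\<lambda>t. p t k) \<in> borel_measurable lborel) \<and>
     (\<forall>t\<in>{0..T}. pointwise_feasible h g v M K L Pmax (\<Theta> t) (\<mu> t) (p t))"

definition avg_rate ::
  "(nat \<Rightarrow> complex) \<Rightarrow> (nat \<Rightarrow> nat \<Rightarrow> complex) \<Rightarrow> (nat \<Rightarrow> complex) \<Rightarrow> nat \<Rightarrow> nat \<Rightarrow> real
    \<Rightarrow> real \<Rightarrow> (real \<Rightarrow> nat \<Rightarrow> complex) \<Rightarrow> (real \<Rightarrow> nat \<Rightarrow> nat) \<Rightarrow> (real \<Rightarrow> nat \<Rightarrow> real)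
    \<Rightarrow> nat \<Rightarrow> real" where
  "avg_rate h g v M K \<sigma>2 T \<Theta> \<mu> p k =
     (1 / T) * (LINT t:{0..T}|lborel. inst_rate h g v M K \<sigma>2 (\<Theta> t) (\<mu> t) (p t) k)"

end

theory Submission
  imports Defs
begin

text \<open>Time sharing: run policy x, compressed by the factor \<nu>, on [0, \<nu>T] and policy y, compressed
  by 1 - \<nu>, on [\<nu>T, T]. The per-time constraints only look at one instant, so they survive the
  reparametrisation, and by the linear change of variables every averaged rate of the combined
  policy is the convex combination of the two averaged rates with weights \<nu> and 1 - \<nu>.
  Integrability holds because the rates are measurable and bounded by log2 (1 + G Pmax / \<sigma>^2),
  where G bounds the effective gain uniformly over all IRS configurations.\<close>

text \<open>For \<nu> = 0 (resp. \<nu> = 1) the policy x (resp. y) is only consulted at a single instant,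
  through HOL's t / 0 = 0, so the boundary cases need no separate definition.\<close>

definition time_share :: "real \<Rightarrow> real \<Rightarrow> (real \<Rightarrow> 'a) \<Rightarrow> (real \<Rightarrow> 'a) \<Rightarrow> real \<Rightarrow> 'a" where
  "time_share \<nu> T x y t = (if t \<le> \<nu> * T then x (t / \<nu>) else y ((t - \<nu> * T) / (1 - \<nu>)))"

lemma time_share_apply:
  "time_share \<nu> T x y t i = time_share \<nu> T (\<lambda>s. x s i) (\<lambda>s. y s i) t"
  by (simp add: time_share_def)

lemma time_share_distrib3:
  "F (time_share \<nu> T x1 y1 t) (time_share \<nu> T x2 y2 t) (time_share \<nu> T x3 y3 t) =
   time_share \<nu> T (\<lambda>s. F (x1 s) (x2 s) (x3 s)) (\<lambda>s. F (y1 s) (y2 s) (y3 s)) t"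
  by (simp add: time_share_def)

lemma time_share_preserves:
  assumes "\<forall>s\<in>{0..T}. P (x s)" "\<forall>s\<in>{0..T}. P (y s)" "0 \<le> \<nu>" "\<nu> \<le> 1" "t \<in> {0..T}"
  shows "P (time_share \<nu> T x y t)"
proof (cases "t \<le> \<nu> * T")
  case True
  have "t / \<nu> \<in> {0..T}"
    using True assms(3,5) by (cases "\<nu> = 0") (auto simp: field_simps)
  then show ?thesis using True assms(1) by (simp add: time_share_def)
next
  case False
  then have "\<nu> < 1"
    using assms(4,5) by (cases "\<nu> = 1") auto
  then have "(t - \<nu> * T) / (1 - \<nu>) \<in> {0..T}"
    using False assms(5) by (auto simp: field_simps)
  then show ?thesis using False assms(2) by (simp add: time_share_def)
qed

lemma measurable_time_share:
  assumes "x \<in> measurable borel N" "y \<in> measurable borel N"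
  shows "time_share \<nu> T x y \<in> measurable borel N"
proof -
  have "(\<lambda>t. x (t / \<nu>)) \<in> measurable borel N" "(\<lambda>t. y ((t - \<nu> * T) / (1 - \<nu>))) \<in> measurable borel N"
    by (auto intro!: measurable_compose[OF _ assms(1)] measurable_compose[OF _ assms(2)])
  then show ?thesis unfolding time_share_def by (intro measurable_If) auto
qed

lemma has_integral_stretch:
  fixes f :: "real \<Rightarrow> 'b::real_normed_vector"
  assumes "(f has_integral I) {0..T}" "0 < c"
  shows "((\<lambda>t. f ((t - a) / c)) has_integral c *\<^sub>R I) {a..a + c * T}"
proof -
  have "((\<lambda>t. f ((1 / c) *\<^sub>R t + - a / c)) has_integral I /\<^sub>R (1 / c) ^ DIM(real))
      (cbox ((0 - - a / c) /\<^sub>R (1 / c)) ((T - - a / c) /\<^sub>R (1 / c)))"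
    using assms by (intro has_integral_affinity') auto
  moreover have "(0 - - a / c) /\<^sub>R (1 / c) = a" "(T - - a / c) /\<^sub>R (1 / c) = a + c * T"
    using assms(2) by (simp_all add: field_simps)
  moreover have "(1 / c) *\<^sub>R t + - a / c = (t - a) / c" for t
    by (simp add: diff_divide_distrib)
  ultimately show ?thesis
    by simp
qed

lemma has_integral_time_share:
  fixes f g :: "real \<Rightarrow> 'b::banach"
  assumes f: "(f has_integral I) {0..T}" and g: "(g has_integral J) {0..T}"
    and "0 \<le> \<nu>" "\<nu> \<le> 1" "0 \<le> T"
  shows "(time_share \<nu> T f g has_integral \<nu> *\<^sub>R I + (1 - \<nu>) *\<^sub>R J) {0..T}"
proof -
  consider "\<nu> = 0" | "\<nu> = 1" | "0 < \<nu>" "\<nu> < 1" using assms(3,4) by linarith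
  then show ?thesis
  proof cases
    case 1
    have "(time_share 0 T f g has_integral J) {0..T}"
      by (rule has_integral_spike_finite[OF _ _ g, of "{0}"]) (auto simp: time_share_def)
    then show ?thesis unfolding 1 by simp
  next
    case 2
    have "(time_share 1 T f g has_integral I) {0..T}"
      by (rule has_integral_spike_finite[OF _ _ f, of "{}"]) (auto simp: time_share_def)
    then show ?thesis unfolding 2 by simp
  next
    case 3
    have f': "((\<lambda>t. f (t / \<nu>)) has_integral \<nu> *\<^sub>R I) {0..\<nu> * T}"
      using has_integral_stretch[OF f \<open>0 < \<nu>\<close>, of 0] by simp
    have g': "((\<lambda>t. g ((t - \<nu> * T) / (1 - \<nu>))) has_integral (1 - \<nu>) *\<^sub>R J) {\<nu> * T..T}"
      using has_integral_stretch[OF g, of "1 - \<nu>" "\<nu> * T"] 3 by (simp add: algebra_simps)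
    have "(time_share \<nu> T f g has_integral \<nu> *\<^sub>R I) {0..\<nu> * T}"
      by (rule has_integral_spike_finite[OF _ _ f', of "{}"]) (auto simp: time_share_def)
    moreover have "(time_share \<nu> T f g has_integral (1 - \<nu>) *\<^sub>R J) {\<nu> * T..T}"
      by (rule has_integral_spike_finite[OF _ _ g', of "{\<nu> * T}"]) (auto simp: time_share_def)
    ultimately show ?thesis
      using 3 assms(5) by (intro has_integral_combine) (auto intro: mult_left_le_one_le)
  qed
qed

definition gain_bound ::
  "(nat \<Rightarrow> complex) \<Rightarrow> (nat \<Rightarrow> nat \<Rightarrow> complex) \<Rightarrow> (nat \<Rightarrow> complex) \<Rightarrow> nat \<Rightarrow> nat \<Rightarrow> real" where
  "gain_bound h g v M k = (cmod (h k) + (\<Sum>m=1..M. cmod (g k m) * cmod (v m)))\<^sup>2"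

lemma eff_gain_le:
  assumes "\<Theta> \<in> IRS_set M L"
  shows "eff_gain h g v M \<Theta> k \<le> gain_bound h g v M k"
proof -
  have unimodular: "cmod (cnj (g k m) * \<Theta> m * v m) = cmod (g k m) * cmod (v m)" if "m \<in> {1..M}" for m
  proof -
    from assms that obtain \<theta> where "\<Theta> m = cis \<theta>"
      unfolding IRS_set_def by blast
    then show ?thesis by (simp add: norm_mult)
  qed
  have "cmod (h k + (\<Sum>m=1..M. cnj (g k m) * \<Theta> m * v m))
      \<le> cmod (h k) + (\<Sum>m=1..M. cmod (cnj (g k m) * \<Theta> m * v m))"
    by (rule order_trans[OF norm_triangle_ineq add_left_mono[OF norm_sum]])
  also have "\<dots> = cmod (h k) + (\<Sum>m=1..M. cmod (g k m) * cmod (v m))"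
    using unimodular by (intro arg_cong[where f = "\<lambda>s. cmod (h k) + s"] sum.cong) auto
  finally show ?thesis
    unfolding eff_gain_def gain_bound_def by (intro power_mono) auto
qed

lemma norm_inst_rate_le:
  assumes "pointwise_feasible h g v M K L Pmax \<Theta> \<mu> p" "0 < \<sigma>2" "k \<in> {1..K}"
  shows "norm (inst_rate h g v M K \<sigma>2 \<Theta> \<mu> p k) \<le> log 2 (1 + gain_bound h g v M k * Pmax / \<sigma>2)"
proof -
  define e where "e = eff_gain h g v M \<Theta> k"
  define S where "S = (\<Sum>i\<in>{i\<in>{1..K}. \<mu> i > \<mu> k}. e * p i)"
  have p_nonneg: "\<forall>i\<in>{1..K}. 0 \<le> p i" and p_sum: "(\<Sum>i=1..K. p i) \<le> Pmax"
    and \<Theta>: "\<Theta> \<in> IRS_set M L"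
    using assms(1) unfolding pointwise_feasible_def by auto
  have e_le: "e \<le> gain_bound h g v M k"
    unfolding e_def using \<Theta> by (rule eff_gain_le)
  have e_nonneg: "0 \<le> e"
    unfolding e_def eff_gain_def by simp
  have pk: "0 \<le> p k" "p k \<le> Pmax"
    using p_nonneg p_sum member_le_sum[of k "{1..K}" p] assms(3) by auto
  have "0 \<le> S"
    unfolding S_def using p_nonneg e_nonneg by (intro sum_nonneg) auto
  have sinr_nonneg: "0 \<le> e * p k / (S + \<sigma>2)"
    using e_nonneg pk \<open>0 \<le> S\<close> assms(2) by simp
  have "e * p k / (S + \<sigma>2) \<le> e * p k / \<sigma>2"
    using e_nonneg pk \<open>0 \<le> S\<close> assms(2) by (intro divide_left_mono) auto
  also have "\<dots> \<le> gain_bound h g v M k * Pmax / \<sigma>2"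
    using e_le e_nonneg pk assms(2) by (intro divide_right_mono mult_mono) auto
  finally have sinr_le: "e * p k / (S + \<sigma>2) \<le> gain_bound h g v M k * Pmax / \<sigma>2" .
  have "inst_rate h g v M K \<sigma>2 \<Theta> \<mu> p k = log 2 (1 + e * p k / (S + \<sigma>2))"
    unfolding inst_rate_def e_def S_def by simp
  then show ?thesis
    using sinr_nonneg sinr_le by simp
qed

lemma measurable_inst_rate:
  assumes "admissible_policy h g v M K L Pmax T \<Theta> \<mu> p"
  shows "(\<lambda>t. inst_rate h g v M K \<sigma>2 (\<Theta> t) (\<mu> t) (p t) k) \<in> borel_measurable lborel"
proof -
  have [measurable]: "\<And>m. (\<lambda>t. \<Theta> t m) \<in> borel_measurable lborel"
    "\<And>i. (\<lambda>t. \<mu> t i) \<in> measurable lborel (count_space UNIV)"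
    "\<And>i. (\<lambda>t. p t i) \<in> borel_measurable lborel"
    using assms unfolding admissible_policy_def by auto
  have gain_measurable: "(\<lambda>t. eff_gain h g v M (\<Theta> t) k) \<in> borel_measurable lborel"
    unfolding eff_gain_def by measurable
  \<comment> \<open>The decoding order takes values in the countable type nat, so comparisons are decided
    one value at a time.\<close>
  have [measurable]: "Measurable.pred lborel (\<lambda>t. \<mu> t k < \<mu> t i)" for i
  proof -
    have "Measurable.pred lborel (\<lambda>t. a < \<mu> t i)" for a
      by (rule measurable_compose_countable[where f = "\<lambda>b t. a < b" and g = "\<lambda>t. \<mu> t i"]) auto
    then show ?thesis
      by (rule measurable_compose_countable[where f = "\<lambda>a t. a < \<mu> t i" and g = "\<lambda>t. \<mu> t k"]) auto
  qed
  have interference_eq: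
    "(\<Sum>i\<in>{i\<in>{1..K}. \<mu> t i > \<mu> t k}. eff_gain h g v M (\<Theta> t) k * p t i)
     = (\<Sum>i\<in>{1..K}. if \<mu> t k < \<mu> t i then eff_gain h g v M (\<Theta> t) k * p t i else 0)" for t
    by (subst sum.inter_filter) auto
  show ?thesis
    unfolding inst_rate_def interference_eq using gain_measurable by measurable
qed

lemma set_integrable_inst_rate:
  assumes "admissible_policy h g v M K L Pmax T \<Theta> \<mu> p" "0 < \<sigma>2" "k \<in> {1..K}"
  shows "set_integrable lborel {0..T} (\<lambda>t. inst_rate h g v M K \<sigma>2 (\<Theta> t) (\<mu> t) (p t) k)"
  unfolding set_integrable_def
proof (rule integrableI_bounded_set_indicator)
  show "(\<lambda>t. inst_rate h g v M K \<sigma>2 (\<Theta> t) (\<mu> t) (p t) k) \<in> borel_measurable lborel"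
    by (rule measurable_inst_rate[OF assms(1)])
  show "AE x in lborel. x \<in> {0..T} \<longrightarrow> norm (inst_rate h g v M K \<sigma>2 (\<Theta> x) (\<mu> x) (p x) k) \<le>
     log 2 (1 + gain_bound h g v M k * Pmax / \<sigma>2)"
    using assms norm_inst_rate_le unfolding admissible_policy_def by blast
qed (auto simp: emeasure_lborel_Icc_eq)

lemma admissible_policy_time_share:
  assumes "admissible_policy h g v M K L Pmax T \<Theta>x \<mu>x px"
    and "admissible_policy h g v M K L Pmax T \<Theta>y \<mu>y py"
    and "0 \<le> \<nu>" "\<nu> \<le> 1"
  shows "admissible_policy h g v M K L Pmax T
           (time_share \<nu> T \<Theta>x \<Theta>y) (time_share \<nu> T \<mu>x \<mu>y) (time_share \<nu> T px py)"
  unfolding admissible_policy_def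
proof (intro conjI allI ballI)
  fix t :: real assume t: "t \<in> {0..T}"
  show "pointwise_feasible h g v M K L Pmax
          (time_share \<nu> T \<Theta>x \<Theta>y t) (time_share \<nu> T \<mu>x \<mu>y t) (time_share \<nu> T px py t)"
    unfolding time_share_distrib3[where F = "pointwise_feasible h g v M K L Pmax"]
    using assms t unfolding admissible_policy_def by (intro time_share_preserves[where P = "\<lambda>b. b"]) auto
qed (use assms in \<open>auto simp: admissible_policy_def time_share_apply intro!: measurable_time_share\<close>)

lemma avg_rate_time_share:
  assumes x: "admissible_policy h g v M K L Pmax T \<Theta>x \<mu>x px"
    and y: "admissible_policy h g v M K L Pmax T \<Theta>y \<mu>y py"
    and "0 < \<sigma>2" "0 \<le> T" "0 \<le> \<nu>" "\<nu> \<le> 1" "k \<in> {1..K}"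
  shows "avg_rate h g v M K \<sigma>2 T
           (time_share \<nu> T \<Theta>x \<Theta>y) (time_share \<nu> T \<mu>x \<mu>y) (time_share \<nu> T px py) k
    = \<nu> * avg_rate h g v M K \<sigma>2 T \<Theta>x \<mu>x px k + (1 - \<nu>) * avg_rate h g v M K \<sigma>2 T \<Theta>y \<mu>y py k"
proof -
  let ?R = "\<lambda>\<Theta> \<mu> p t. inst_rate h g v M K \<sigma>2 (\<Theta> t) (\<mu> t) (p t) k"
  have avg_eq: "avg_rate h g v M K \<sigma>2 T \<Theta> \<mu> p k = integral {0..T} (?R \<Theta> \<mu> p) / T"
    if "admissible_policy h g v M K L Pmax T \<Theta> \<mu> p" for \<Theta> \<mu> p
    using set_borel_integral_eq_integral(2)[OF set_integrable_inst_rate[OF that \<open>0 < \<sigma>2\<close> \<open>k \<in> {1..K}\<close>]]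
    by (simp add: avg_rate_def)
  have has_int: "(?R \<Theta> \<mu> p has_integral integral {0..T} (?R \<Theta> \<mu> p)) {0..T}"
    if "admissible_policy h g v M K L Pmax T \<Theta> \<mu> p" for \<Theta> \<mu> p
    using set_borel_integral_eq_integral(1)[OF set_integrable_inst_rate[OF that \<open>0 < \<sigma>2\<close> \<open>k \<in> {1..K}\<close>]]
    by (simp add: has_integral_integral)
  have "?R (time_share \<nu> T \<Theta>x \<Theta>y) (time_share \<nu> T \<mu>x \<mu>y) (time_share \<nu> T px py)
      = time_share \<nu> T (?R \<Theta>x \<mu>x px) (?R \<Theta>y \<mu>y py)"
    by (auto simp: time_share_def)
  then have "integral {0..T} (?R (time_share \<nu> T \<Theta>x \<Theta>y) (time_share \<nu> T \<mu>x \<mu>y) (time_share \<nu> T px py))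
      = \<nu> * integral {0..T} (?R \<Theta>x \<mu>x px) + (1 - \<nu>) * integral {0..T} (?R \<Theta>y \<mu>y py)"
    using has_integral_time_share[OF has_int[OF x] has_int[OF y]] assms(4-6) by (simp add: integral_unique)
  then show ?thesis
    using x y admissible_policy_time_share[OF x y assms(5,6)] by (simp add: avg_eq add_divide_distrib)
qed

theorem theorem1:
  fixes h :: "nat \<Rightarrow> complex" and v :: "nat \<Rightarrow> complex" and g :: "nat \<Rightarrow> nat \<Rightarrow> complex"
    and M K b :: nat and \<sigma>2 Pmax T :: real and \<alpha> :: "nat \<Rightarrow> real"
    and \<Theta>x \<Theta>y :: "real \<Rightarrow> nat \<Rightarrow> complex" and \<mu>x \<mu>y :: "real \<Rightarrow> nat \<Rightarrow> nat"
    and px py :: "real \<Rightarrow> nat \<Rightarrow> real" and Rx Ry \<nu> :: real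
  assumes "0 < b" and "0 < \<sigma>2" and "0 < Pmax" and "0 < T"
    and "\<forall>k\<in>{1..K}. 0 \<le> \<alpha> k" and "(\<Sum>k=1..K. \<alpha> k) = 1"
    and "admissible_policy h g v M K (2 ^ b) Pmax T \<Theta>x \<mu>x px"
    and "admissible_policy h g v M K (2 ^ b) Pmax T \<Theta>y \<mu>y py"
    and "\<forall>k\<in>{1..K}. avg_rate h g v M K \<sigma>2 T \<Theta>x \<mu>x px k \<ge> \<alpha> k * Rx"
    and "\<forall>k\<in>{1..K}. avg_rate h g v M K \<sigma>2 T \<Theta>y \<mu>y py k \<ge> \<alpha> k * Ry"
    and "0 \<le> \<nu>" and "\<nu> \<le> 1"
  shows "\<exists>\<Theta>z \<mu>z pz. admissible_policy h g v M K (2 ^ b) Pmax T \<Theta>z \<mu>z pz \<and>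
           (\<forall>k\<in>{1..K}.
              set_integrable lborel {0..T} (\<lambda>t. inst_rate h g v M K \<sigma>2 (\<Theta>z t) (\<mu>z t) (pz t) k) \<and>
              avg_rate h g v M K \<sigma>2 T \<Theta>z \<mu>z pz k \<ge> \<alpha> k * (\<nu> * Rx + (1 - \<nu>) * Ry))"
proof -
  define \<Theta>z \<mu>z pz where "\<Theta>z = time_share \<nu> T \<Theta>x \<Theta>y" and "\<mu>z = time_share \<nu> T \<mu>x \<mu>y"
    and "pz = time_share \<nu> T px py"
  have z: "admissible_policy h g v M K (2 ^ b) Pmax T \<Theta>z \<mu>z pz"
    unfolding \<Theta>z_def \<mu>z_def pz_def using assms(7,8,11,12) by (rule admissible_policy_time_share)
  show ?thesis
  proof (intro exI conjI ballI)
    fix k assume k: "k \<in> {1..K}"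
    show "set_integrable lborel {0..T} (\<lambda>t. inst_rate h g v M K \<sigma>2 (\<Theta>z t) (\<mu>z t) (pz t) k)"
      using z assms(2) k by (rule set_integrable_inst_rate)
    have "\<alpha> k * (\<nu> * Rx + (1 - \<nu>) * Ry) = \<nu> * (\<alpha> k * Rx) + (1 - \<nu>) * (\<alpha> k * Ry)"
      by (simp add: algebra_simps)
    also have "\<dots> \<le> \<nu> * avg_rate h g v M K \<sigma>2 T \<Theta>x \<mu>x px k + (1 - \<nu>) * avg_rate h g v M K \<sigma>2 T \<Theta>y \<mu>y py k"
      using assms(9-12) k by (intro add_mono mult_left_mono) auto
    also have "\<dots> = avg_rate h g v M K \<sigma>2 T \<Theta>z \<mu>z pz k"
      unfolding \<Theta>z_def \<mu>z_def pz_def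
      using assms(2,4,11,12) k by (intro avg_rate_time_share[OF assms(7,8), symmetric]) auto
    finally show "avg_rate h g v M K \<sigma>2 T \<Theta>z \<mu>z pz k \<ge> \<alpha> k * (\<nu> * Rx + (1 - \<nu>) * Ry)" .
  qed (rule z)
qed

end
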